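(* Let $G$ be a split graph with vertex partition $\{X,Y\}$, where $X=\{v_1,\ldots,v_n\}$ is a maximal clique of $G$ and $Y=V(G)\setminus X$ is a stable set, and write $d_i=|N_G(v_i)\cap Y|$, with $d_1\ge\cdots\ge d_n$ and $n\ge 4$. If $d_1<\lfloor n/2\rfloor$ and $d_2=0$, then $\chi'_{\rm irr}(G)=3$.
   Context: All graphs are finite and simple. A graph is locally irregular if any two adjacent vertices have distinct degrees. A locally irregular decomposition of $G$ is a collection of locally irregular subgraphs whose edge sets partition $E(G)$; for a graph admitting one, $\chi'_{\rm irr}(G)$ is the minimum number of subgraphs in such a decomposition. *)

theory Defs
  imports Main
begin

definition simple_graph :: "'a set \<Rightarrow> 'a set set \<Rightarrow> bool" where
  "simple_graph V E \<longleftrightarrow> finite V \<and>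
     (\<forall>e\<in>E. \<exists>u w. u \<noteq> w \<and> u \<in> V \<and> w \<in> V \<and> e = {u, w})"

definition edeg :: "'a set set \<Rightarrow> 'a \<Rightarrow> nat" where
  "edeg F x = card {e\<in>F. x \<in> e}"

definition locally_irregular :: "'a set set \<Rightarrow> bool" where
  "locally_irregular F \<longleftrightarrow> (\<forall>u w. {u, w} \<in> F \<longrightarrow> u \<noteq> w \<longrightarrow> edeg F u \<noteq> edeg F w)"

definition irr_decomp_k :: "'a set set \<Rightarrow> nat \<Rightarrow> bool" where
  "irr_decomp_k E k \<longleftrightarrow> (\<exists>c :: 'a set \<Rightarrow> nat.
      (\<forall>e\<in>E. c e < k) \<and> (\<forall>i<k. locally_irregular {e\<in>E. c e = i}))"

definition irr_decomposable :: "'a set set \<Rightarrow> bool" where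
  "irr_decomposable E \<longleftrightarrow> (\<exists>k. irr_decomp_k E k)"

definition chi_irr :: "'a set set \<Rightarrow> nat" where
  "chi_irr E = (LEAST k. irr_decomp_k E k)"

end

theory Submission
  imports Defs
begin

text \<open>Apart from isolated vertices of \<open>Y\<close>, the graph is the clique on \<open>v\<^sub>1, \<dots>, v\<^sub>n\<close>
  together with \<open>d\<^sub>1 < \<lfloor>n/2\<rfloor>\<close> pendant edges at \<open>v\<^sub>1\<close>.

  Three colours suffice: give the clique edge \<open>v\<^sub>iv\<^sub>j\<close> colour \<open>0\<close> if \<open>i + j > n\<close> and
  colour \<open>1\<close> otherwise, recolour a path of length two in the middle with \<open>2\<close>, and give the
  pendant edges colour \<open>1\<close>.

  Two colours do not suffice. Among \<open>v\<^sub>2, \<dots>, v\<^sub>n\<close> the degrees in the two colours add up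
  to \<open>n - 1\<close>, so two of these vertices with equal colour-\<open>0\<close> degrees would clash in whichever
  colour joins them. Hence their degrees in one colour class are exactly \<open>0, \<dots>, n - 2\<close>, which
  makes that class a half graph and determines the neighbours of \<open>v\<^sub>1\<close> and their degrees in
  both colours. Fewer than \<open>\<lfloor>n/2\<rfloor>\<close> pendant edges cannot move both degrees of \<open>v\<^sub>1\<close> away
  from those of all its neighbours.\<close>

lemma irr_decomp_k_Suc:
  assumes "irr_decomp_k E k"
  shows "irr_decomp_k E (Suc k)"
proof -
  obtain c where c: "\<forall>e\<in>E. c e < k" "\<forall>i<k. locally_irregular {e \<in> E. c e = i}"
    using assms unfolding irr_decomp_k_def by blast
  have "locally_irregular {e \<in> E. c e = k}"
    using c(1) unfolding locally_irregular_def by fastforce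
  then show ?thesis
    unfolding irr_decomp_k_def using c by (intro exI[of _ c]) (auto simp: less_Suc_eq)
qed

lemma irr_decomp_k_mono:
  assumes "irr_decomp_k E j" and "j \<le> k"
  shows "irr_decomp_k E k"
  using assms(2,1) by (induction k rule: dec_induct) (auto intro: irr_decomp_k_Suc)

lemma chi_irr_eqI:
  assumes "irr_decomp_k E (Suc k)" and "\<not> irr_decomp_k E k"
  shows "chi_irr E = Suc k"
  unfolding chi_irr_def
proof (rule Least_equality)
  fix j assume "irr_decomp_k E j"
  then show "Suc k \<le> j"
    using assms(2) irr_decomp_k_mono[of E j k] by (cases "j \<le> k") auto
qed (rule assms(1))

section \<open>Half graphs\<close>

definition nbr_count :: "('b \<Rightarrow> 'b \<Rightarrow> bool) \<Rightarrow> 'b set \<Rightarrow> 'b \<Rightarrow> nat" where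
  "nbr_count adj S w = card {u \<in> S. u \<noteq> w \<and> adj w u}"

lemma staircase_peel:
  fixes adj :: "'b \<Rightarrow> 'b \<Rightarrow> bool" and W :: "'b set" and w0 wt :: 'b
  defines "W' \<equiv> W - {w0, wt}"
  assumes sym: "symp adj" and fin: "finite W" and z: "z \<notin> W"
    and img: "nbr_count adj (insert z W) ` W = {0..<card W}" and c2: "2 \<le> card W"
    and w0: "w0 \<in> W" "nbr_count adj (insert z W) w0 = 0"
    and wt: "wt \<in> W" "nbr_count adj (insert z W) wt = card W - 1"
  shows "\<not> adj w0 z" and "adj wt z"
    and "\<And>x. x \<in> W' \<Longrightarrow> nbr_count adj (insert z W) x = Suc (nbr_count adj (insert z W') x)"
    and "nbr_count adj (insert z W') ` W' = {0..<card W'}"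
proof -
  let ?S = "insert z W"
  let ?deg = "nbr_count adj ?S"
  have fin_S: "finite ?S" and card_S: "card ?S = card W + 1"
    using fin z by auto
  have w0_isolated: "\<not> adj w0 u" if "u \<in> ?S" "u \<noteq> w0" for u
    using w0(2) that fin_S by (auto simp: nbr_count_def)
  have "w0 \<noteq> wt" using w0(2) wt(2) c2 by auto
  have wt_nbrs: "{u \<in> ?S. u \<noteq> wt \<and> adj wt u} = ?S - {wt, w0}"
  proof (rule card_subset_eq)
    show "{u \<in> ?S. u \<noteq> wt \<and> adj wt u} \<subseteq> ?S - {wt, w0}"
      using w0_isolated[of wt] sympD[OF sym, of wt w0] w0(1) wt(1) \<open>w0 \<noteq> wt\<close> by auto
    show "card {u \<in> ?S. u \<noteq> wt \<and> adj wt u} = card (?S - {wt, w0})"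
      using wt w0 card_S fin_S \<open>w0 \<noteq> wt\<close> by (simp add: nbr_count_def card_Diff_subset)
  qed (use fin_S in simp)
  show "\<not> adj w0 z" using w0_isolated z w0(1) by blast
  show "adj wt z" using wt_nbrs z w0(1) wt(1) by blast
  show deg_W': "?deg x = Suc (nbr_count adj (insert z W') x)" if "x \<in> W'" for x
  proof -
    have "x \<in> ?S" "x \<noteq> w0" "x \<noteq> wt" using that by (auto simp: W'_def)
    then have "adj x wt" "\<not> adj x w0"
      using wt_nbrs w0_isolated[of x] sympD[OF sym] by blast+
    then have "{u \<in> ?S. u \<noteq> x \<and> adj x u} = insert wt {u \<in> insert z W'. u \<noteq> x \<and> adj x u}"
      using wt(1) \<open>x \<noteq> wt\<close> by (auto simp: W'_def)
    moreover have "wt \<notin> insert z W'" using z wt(1) by (auto simp: W'_def)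
    ultimately show ?thesis using fin by (simp add: nbr_count_def W'_def)
  qed
  have inj: "inj_on ?deg W"
    using fin img by (intro eq_card_imp_inj_on) auto
  have "Suc ` nbr_count adj (insert z W') ` W' = ?deg ` W'"
    using deg_W' by (auto simp: image_image)
  also have "\<dots> = ?deg ` W - ?deg ` {w0, wt}"
    unfolding W'_def using inj w0(1) wt(1) by (simp add: inj_on_image_set_diff)
  also have "\<dots> = {0..<card W} - {0, card W - 1}"
    using img w0(2) wt(2) by simp
  also have "\<dots> = Suc ` {0..<card W'}"
    using c2 fin w0(1) wt(1) \<open>w0 \<noteq> wt\<close> by (auto simp: W'_def card_Diff_subset)
  finally show "nbr_count adj (insert z W') ` W' = {0..<card W'}"
    unfolding inj_image_eq_iff[OF inj_Suc] .
qed

text \<open>Removing the vertices of degree \<open>0\<close> and \<open>|W| - 1\<close> lowers every other degree by one,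
  so the degrees \<open>0, \<dots>, |W| - 1\<close> force a half graph.\<close>

lemma staircase_adj_iff:
  assumes sym: "symp adj" and "finite W" "z \<notin> W"
    and "nbr_count adj (insert z W) ` W = {0..<card W}" and "w \<in> W"
  shows "adj w z \<longleftrightarrow> (card W + 1) div 2 \<le> nbr_count adj (insert z W) w"
  using assms(2-)
proof (induction "card W" arbitrary: W w rule: less_induct)
  case less
  let ?deg = "nbr_count adj (insert z W)"
  have "card W \<noteq> 0" using less.prems(1,4) by auto
  then have "0 \<in> ?deg ` W" "card W - 1 \<in> ?deg ` W"
    using less.prems(3) by auto
  then obtain w0 wt where w0: "w0 \<in> W" "?deg w0 = 0" and wt: "wt \<in> W" "?deg wt = card W - 1"
    by (metis imageE)
  show ?case
  proof (cases "card W = 1")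
    case True
    then have "w = w0" using less.prems(1,4) w0(1) by (metis card_1_singletonE singletonD)
    moreover have "\<not> adj w0 z"
      using w0 less.prems(1,2) by (auto simp: nbr_count_def)
    ultimately show ?thesis using w0(2) True by simp
  next
    case False
    then have c2: "2 \<le> card W" using \<open>card W \<noteq> 0\<close> by simp
    note peel = staircase_peel[OF sym less.prems(1-3) c2 w0 wt]
    define W' where "W' = W - {w0, wt}"
    have "w0 \<noteq> wt" using w0(2) wt(2) c2 by auto
    then have card_W': "card W' + 2 = card W"
      using less.prems(1) w0(1) wt(1) c2 by (simp add: W'_def card_Diff_subset)
    consider "w = w0" | "w = wt" | "w \<in> W'" using less.prems(4) by (auto simp: W'_def)
    then show ?thesis
    proof cases
      case 1
      then show ?thesis using peel(1) w0(2) c2 by simp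
    next
      case 2
      then show ?thesis using peel(2) wt(2) c2 by simp
    next
      case 3
      have "card W' < card W" "finite W'" "z \<notin> W'"
        using card_W' less.prems(1,2) by (auto simp: W'_def)
      then have "adj w z \<longleftrightarrow> (card W' + 1) div 2 \<le> nbr_count adj (insert z W') w"
        using less.hyps peel(4) 3 unfolding W'_def by blast
      then show ?thesis using peel(3)[OF 3[unfolded W'_def]] card_W' unfolding W'_def by linarith
    qed
  qed
qed

section \<open>Two-colourings of a clique with pendant edges\<close>

definition colour_deg :: "(nat \<Rightarrow> nat \<Rightarrow> nat) \<Rightarrow> nat \<Rightarrow> nat \<Rightarrow> nat \<Rightarrow> nat" where
  "colour_deg col n k i = card {j \<in> {1..n}. j \<noteq> i \<and> col i j = k}"

text \<open>The degree of vertex \<open>i\<close> in colour class \<open>k\<close> when the edges of the complete graph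
  on \<open>{1..n}\<close> are coloured by \<open>col\<close> and vertex \<open>1\<close> carries \<open>q k\<close> further pendant edges
  of colour \<open>k\<close>.\<close>

definition class_deg :: "(nat \<Rightarrow> nat \<Rightarrow> nat) \<Rightarrow> (nat \<Rightarrow> nat) \<Rightarrow> nat \<Rightarrow> nat \<Rightarrow> nat \<Rightarrow> nat" where
  "class_deg col q n k i = colour_deg col n k i + (if i = 1 then q k else 0)"

definition irregular_colouring :: "(nat \<Rightarrow> nat \<Rightarrow> nat) \<Rightarrow> (nat \<Rightarrow> nat) \<Rightarrow> nat \<Rightarrow> bool" where
  "irregular_colouring col q n \<longleftrightarrow>
     (\<forall>i\<in>{1..n}. \<forall>j\<in>{1..n}. i \<noteq> j \<longrightarrow>
        class_deg col q n (col i j) i \<noteq> class_deg col q n (col i j) j)"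

lemma colour_deg_sum:
  assumes "\<forall>j\<in>{1..n}. j \<noteq> i \<longrightarrow> col i j < 2" and "i \<in> {1..n}"
  shows "colour_deg col n 0 i + colour_deg col n 1 i = n - 1"
proof -
  have "{1..n} - {i} = {j \<in> {1..n}. j \<noteq> i \<and> col i j = 0} \<union> {j \<in> {1..n}. j \<noteq> i \<and> col i j = 1}"
    using assms(1) by force
  then have "card ({1..n} - {i}) = colour_deg col n 0 i + colour_deg col n 1 i"
    by (simp add: colour_deg_def card_Un_disjoint disjoint_iff)
  then show ?thesis using assms(2) by simp
qed

lemma colour_deg_pos_if_universal:
  assumes sym: "\<And>i j. col i j = col j i"
    and a: "a \<in> {1..n}" "colour_deg col n k a = n - 1" and b: "b \<in> {1..n}" "b \<noteq> a"
  shows "colour_deg col n k b \<noteq> 0"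
proof -
  have "{j \<in> {1..n}. j \<noteq> a \<and> col a j = k} = {1..n} - {a}"
    using a by (intro card_subset_eq) (auto simp: colour_deg_def)
  then have "col a b = k" using b by blast
  then have "a \<in> {j \<in> {1..n}. j \<noteq> b \<and> col b j = k}" using a(1) b(2) sym[of b a] by simp
  then show ?thesis unfolding colour_deg_def by (subst card_0_eq) auto
qed

lemma image_reflect_atLeastLessThan: "(\<lambda>t. n - 1 - t) ` {1..<n} = {0..<n - 1 :: nat}"
proof
  show "{0..<n - 1} \<subseteq> (\<lambda>t. n - 1 - t) ` {1..<n}"
  proof
    fix t assume "t \<in> {0..<n - 1}"
    then have "n - 1 - t \<in> {1..<n}" "t = n - 1 - (n - 1 - t)" by auto
    then show "t \<in> (\<lambda>t. n - 1 - t) ` {1..<n}" by blast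
  qed
qed auto

lemma staircase_colour_exists:
  assumes sym: "\<And>i j. col i j = col j i"
    and two_colours: "\<forall>i\<in>{1..n}. \<forall>j\<in>{1..n}. i \<noteq> j \<longrightarrow> col i j < 2"
    and irr: "irregular_colouring col q n"
  shows "\<exists>k<2. colour_deg col n k ` {2..n} = {0..<n - 1}"
proof -
  let ?f = "colour_deg col n 0"
  have sum: "?f i + colour_deg col n 1 i = n - 1" if "i \<in> {1..n}" for i
  proof (rule colour_deg_sum)
    show "\<forall>j\<in>{1..n}. j \<noteq> i \<longrightarrow> col i j < 2" using two_colours that by simp
  qed (rule that)
  have "inj_on ?f {2..n}"
  proof (rule inj_onI, rule ccontr)
    fix i j assume ij: "i \<in> {2..n}" "j \<in> {2..n}" "?f i = ?f j" "i \<noteq> j"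
    then have "colour_deg col n k i = colour_deg col n k j" if "k < 2" for k
      using sum[of i] sum[of j] that by (auto simp: less_2_cases_iff)
    moreover have "col i j < 2" using two_colours ij by auto
    ultimately show False using irr ij by (fastforce simp: irregular_colouring_def class_deg_def)
  qed
  then have card_img: "card (?f ` {2..n}) = n - 1" by (simp add: card_image)
  have img_le: "?f i \<le> n - 1" if "i \<in> {2..n}" for i using sum[of i] that by simp
  show ?thesis
  proof (cases "n - 1 \<in> ?f ` {2..n}")
    case False
    have "?f i < n - 1" if "i \<in> {2..n}" for i
      using img_le[OF that] False that by (metis imageI le_neq_implies_less)
    then have "?f ` {2..n} \<subseteq> {0..<n - 1}" by auto
    then have "?f ` {2..n} = {0..<n - 1}" using card_img by (simp add: card_subset_eq)
    then show ?thesis by (intro exI[of _ 0]) simp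
  next
    case True
    then obtain a where a: "a \<in> {2..n}" "?f a = n - 1" by auto
    have "?f i \<in> {1..<n}" if "i \<in> {2..n}" for i
    proof -
      have "?f i \<noteq> 0"
        using colour_deg_pos_if_universal[OF sym, where a = a and k = 0 and b = i] a that
        by (cases "i = a") auto
      then show ?thesis using img_le[OF that] that by auto
    qed
    then have "?f ` {2..n} \<subseteq> {1..<n}" by auto
    then have img0: "?f ` {2..n} = {1..<n}" using card_img by (simp add: card_subset_eq)
    have "colour_deg col n 1 i = n - 1 - ?f i" if "i \<in> {2..n}" for i
      using sum[of i] that by simp
    then have "colour_deg col n 1 ` {2..n} = (\<lambda>t. n - 1 - t) ` ?f ` {2..n}"
      unfolding image_image by (intro image_cong) auto
    then show ?thesis unfolding img0 image_reflect_atLeastLessThan by (intro exI[of _ 1]) simp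
  qed
qed

lemma staircase_colour_nbrs_1:
  assumes sym: "\<And>i j. col i j = col j i"
    and stair: "colour_deg col n k ` {2..n} = {0..<n - 1}" and "w \<in> {2..n}"
  shows "col 1 w = k \<longleftrightarrow> n div 2 \<le> colour_deg col n k w"
proof -
  let ?adj = "\<lambda>a b. col a b = k"
  have "symp ?adj" using sym by (simp add: symp_def)
  moreover have "insert 1 {2..n} = {1..n}" using assms(3) by auto
  then have "nbr_count ?adj (insert 1 {2..n}) = colour_deg col n k"
    by (simp add: fun_eq_iff nbr_count_def colour_deg_def)
  ultimately have "?adj w 1 \<longleftrightarrow> (card {2..n} + 1) div 2 \<le> colour_deg col n k w"
    using staircase_adj_iff[of ?adj "{2..n}" 1 w] stair assms(3) by simp
  then show ?thesis using sym[of w 1] assms(3) by simp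
qed

lemma staircase_colour_deg_1:
  assumes sym: "\<And>i j. col i j = col j i"
    and stair: "colour_deg col n k ` {2..n} = {0..<n - 1}"
  shows "colour_deg col n k 1 = n - 1 - n div 2"
proof -
  let ?f = "colour_deg col n k"
  let ?N = "{w \<in> {2..n}. ?f w \<in> {n div 2..<n - 1}}"
  have f_lt: "?f w < n - 1" if "w \<in> {2..n}" for w
    using imageI[OF that, of ?f] unfolding stair by simp
  have "inj_on ?f {2..n}" using stair by (intro eq_card_imp_inj_on) auto
  then have "inj_on ?f ?N" by (rule inj_on_subset) auto
  moreover have "?f ` ?N = ?f ` {2..n} \<inter> {n div 2..<n - 1}" by blast
  then have "?f ` ?N = {n div 2..<n - 1}" unfolding stair by auto
  ultimately have "card ?N = n - 1 - n div 2" using card_image by fastforce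
  moreover have "{j \<in> {1..n}. j \<noteq> 1 \<and> col 1 j = k} = ?N"
  proof (intro set_eqI)
    fix j
    show "j \<in> {j \<in> {1..n}. j \<noteq> 1 \<and> col 1 j = k} \<longleftrightarrow> j \<in> ?N"
      using staircase_colour_nbrs_1[OF sym stair, of j] f_lt[of j] by (cases "j \<in> {2..n}") auto
  qed
  ultimately show ?thesis by (simp add: colour_deg_def)
qed

lemma no_irregular_staircase_colouring:
  assumes sym: "\<And>i j. col i j = col j i"
    and two_colours: "\<forall>i\<in>{1..n}. \<forall>j\<in>{1..n}. i \<noteq> j \<longrightarrow> col i j < 2"
    and irr: "irregular_colouring col q n" and k: "k < 2"
    and stair: "colour_deg col n k ` {2..n} = {0..<n - 1}"
    and few_pendants: "q 0 + q 1 < n div 2"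
  shows False
proof -
  define k' where "k' = 1 - k"
  have q: "q k + q k' = q 0 + q 1" using k by (auto simp: k'_def less_2_cases_iff)
  have n2: "2 \<le> n" using few_pendants by simp
  have sum: "colour_deg col n k i + colour_deg col n k' i = n - 1" if "i \<in> {1..n}" for i
  proof -
    have "\<forall>j\<in>{1..n}. j \<noteq> i \<longrightarrow> col i j < 2" using two_colours that by simp
    then have "colour_deg col n 0 i + colour_deg col n 1 i = n - 1" using that by (rule colour_deg_sum)
    then show ?thesis using k by (auto simp: k'_def less_2_cases_iff)
  qed
  let ?D = "class_deg col q n"
  have irr': "?D (col i j) i \<noteq> ?D (col i j) j" if "i \<in> {1..n}" "j \<in> {1..n}" "i \<noteq> j" for i j
    using irr that unfolding irregular_colouring_def by simp
  text \<open>The neighbours of vertex \<open>1\<close> in colour \<open>k\<close> have \<open>k\<close>-degrees \<open>\<lfloor>n/2\<rfloor>, \<dots>, n - 2\<close>, the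
    other vertices have \<open>k'\<close>-degrees \<open>n - \<lfloor>n/2\<rfloor>, \<dots>, n - 1\<close>, and the two degrees of
    vertex \<open>1\<close> must avoid these ranges.\<close>
  have miss_k: "?D k 1 \<noteq> t" if "n div 2 \<le> t" "t < n - 1" for t
  proof -
    have "t \<in> colour_deg col n k ` {2..n}" unfolding stair using that by simp
    then obtain w where w: "w \<in> {2..n}" "colour_deg col n k w = t" by blast
    then have "col 1 w = k" using staircase_colour_nbrs_1[OF sym stair] that(1) by blast
    then show ?thesis using irr'[of 1 w] w n2 by (simp add: class_deg_def)
  qed
  have miss_k': "?D k' 1 \<noteq> n - 1 - t" if "t < n div 2" for t
  proof -
    have "t \<in> colour_deg col n k ` {2..n}" unfolding stair using that by simp
    then obtain w where w: "w \<in> {2..n}" "colour_deg col n k w = t" by blast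
    then have "col 1 w \<noteq> k" using staircase_colour_nbrs_1[OF sym stair] that by simp
    moreover have "col 1 w < 2" using two_colours w(1) by simp
    ultimately have "col 1 w = k'" using k by (auto simp: k'_def)
    moreover have "colour_deg col n k' w = n - 1 - t" using sum[of w] w by auto
    ultimately show ?thesis using irr'[of 1 w] w n2 by (simp add: class_deg_def)
  qed
  have D1: "?D k 1 = n - 1 - n div 2 + q k" "?D k' 1 = n div 2 + q k'"
    using staircase_colour_deg_1[OF sym stair] sum[of 1] n2 by (auto simp: class_deg_def)
  show False
  proof (cases "q k' = 0")
    case False
    then show False using miss_k'[of "n - 1 - ?D k' 1"] D1(2) q few_pendants by linarith
  next
    case True
    show False
    proof (cases "even n")
      case True
      then show False using miss_k'[of "n div 2 - 1"] D1(2) \<open>q k' = 0\<close> n2 by (auto elim!: evenE)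
    next
      case False
      then show False using miss_k[of "?D k 1"] D1(1) \<open>q k' = 0\<close> q few_pendants by (auto elim!: oddE)
    qed
  qed
qed

lemma no_irregular_2_colouring:
  assumes "\<And>i j. col i j = col j i" and "\<forall>i\<in>{1..n}. \<forall>j\<in>{1..n}. i \<noteq> j \<longrightarrow> col i j < 2"
    and "irregular_colouring col q n" and "q 0 + q 1 < n div 2"
  shows False
proof -
  obtain k where "k < 2" "colour_deg col n k ` {2..n} = {0..<n - 1}"
    using staircase_colour_exists[OF assms(1-3)] by blast
  then show False by (rule no_irregular_staircase_colouring[OF assms(1-3) _ _ assms(4)])
qed

definition path_edge :: "nat \<Rightarrow> nat \<Rightarrow> nat \<Rightarrow> bool" where
  "path_edge p i j \<longleftrightarrow> {i, j} = {p - 1, p} \<or> {i, j} = {p, p + 1}"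

section \<open>An irregular three-colouring\<close>

text \<open>Colouring \<open>{i, j}\<close> with \<open>0\<close> if \<open>i + j > n\<close> and with \<open>1\<close> otherwise leaves exactly one
  pair of adjacent vertices with equal degrees, next to the middle of \<open>{1..n}\<close>; recolouring the
  path \<open>p - 1, p, p + 1\<close> through that pair with \<open>2\<close> removes the tie.\<close>

definition three_colouring :: "nat \<Rightarrow> nat \<Rightarrow> nat \<Rightarrow> nat \<Rightarrow> nat" where
  "three_colouring n p i j = (if path_edge p i j then 2 else if n < i + j then 0 else 1)"

lemma path_edge_iff:
  "path_edge p i j \<longleftrightarrow>
     (i = p - 1 \<and> j = p) \<or> (i = p \<and> j = p - 1) \<or> (i = p \<and> j = p + 1) \<or> (i = p + 1 \<and> j = p)"
  unfolding path_edge_def doubleton_eq_iff by auto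

lemma three_colouring_sym: "three_colouring n p i j = three_colouring n p j i"
  unfolding three_colouring_def path_edge_def by (simp add: insert_commute add.commute)

lemma card_upper_nbrs:
  assumes "i \<in> {1..n}"
  shows "card {j \<in> {1..n}. j \<noteq> i \<and> n < i + j} = i - (if n < 2 * i then 1 else 0)"
proof -
  have "{j \<in> {1..n}. j \<noteq> i \<and> n < i + j} = {n + 1 - i..n} - {i}" using assms by auto
  moreover have "i \<in> {n + 1 - i..n} \<longleftrightarrow> n < 2 * i" using assms by auto
  ultimately show ?thesis using assms by (simp add: card_Diff_singleton_if)
qed

lemma card_lower_nbrs:
  assumes "i \<in> {1..n}"
  shows "card {j \<in> {1..n}. j \<noteq> i \<and> \<not> n < i + j} = n - i - (if 2 * i \<le> n then 1 else 0)"
proof -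
  have "{j \<in> {1..n}. j \<noteq> i \<and> \<not> n < i + j} = {1..n - i} - {i}" using assms by auto
  moreover have "i \<in> {1..n - i} \<longleftrightarrow> 2 * i \<le> n" using assms by auto
  ultimately show ?thesis by (simp add: card_Diff_singleton_if)
qed

lemma colour_deg_three_colouring:
  assumes "2 \<le> p" "p + 1 \<le> n" "i \<in> {1..n}"
  defines "pd \<equiv> if i = p then 2 else if i + 1 = p \<or> i = p + 1 then 1 else 0"
  shows "colour_deg (three_colouring n p) n 2 i = pd"
    and "n < 2 * p - 1 \<Longrightarrow> colour_deg (three_colouring n p) n 0 i = i - (if n < 2 * i then 1 else 0) - pd"
    and "n < 2 * p - 1 \<Longrightarrow> colour_deg (three_colouring n p) n 1 i = n - i - (if 2 * i \<le> n then 1 else 0)"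
    and "2 * p + 1 \<le> n \<Longrightarrow> colour_deg (three_colouring n p) n 0 i = i - (if n < 2 * i then 1 else 0)"
    and "2 * p + 1 \<le> n \<Longrightarrow> colour_deg (three_colouring n p) n 1 i = n - i - (if 2 * i \<le> n then 1 else 0) - pd"
proof -
  let ?C = "{j \<in> {1..n}. j \<noteq> i \<and> path_edge p i j}"
  let ?U = "{j \<in> {1..n}. j \<noteq> i \<and> n < i + j}"
  let ?L = "{j \<in> {1..n}. j \<noteq> i \<and> \<not> n < i + j}"
  have C: "?C = (if i = p then {p - 1, p + 1} else if i + 1 = p \<or> i = p + 1 then {p} else {})"
    using assms(1-3) unfolding path_edge_iff by auto
  have card_C: "card ?C = pd" unfolding C pd_def using assms(1) by auto
  have deg: "colour_deg (three_colouring n p) n 2 i = card ?C"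
    "colour_deg (three_colouring n p) n 0 i = card (?U - ?C)"
    "colour_deg (three_colouring n p) n 1 i = card (?L - ?C)"
    unfolding colour_deg_def three_colouring_def by (auto intro!: arg_cong[where f = card])
  show "colour_deg (three_colouring n p) n 2 i = pd" using deg(1) card_C by simp
  show "colour_deg (three_colouring n p) n 0 i = i - (if n < 2 * i then 1 else 0) - pd"
    and "colour_deg (three_colouring n p) n 1 i = n - i - (if 2 * i \<le> n then 1 else 0)"
    if "n < 2 * p - 1"
  proof -
    have "?C \<subseteq> ?U" using that assms(1,2) unfolding C by auto
    then show "colour_deg (three_colouring n p) n 0 i = i - (if n < 2 * i then 1 else 0) - pd"
      using deg(2) card_C card_upper_nbrs[OF assms(3)] by (simp add: card_Diff_subset)
    from \<open>?C \<subseteq> ?U\<close> have "?L - ?C = ?L" by auto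
    then show "colour_deg (three_colouring n p) n 1 i = n - i - (if 2 * i \<le> n then 1 else 0)"
      using deg(3) card_lower_nbrs[OF assms(3)] by simp
  qed
  show "colour_deg (three_colouring n p) n 0 i = i - (if n < 2 * i then 1 else 0)"
    and "colour_deg (three_colouring n p) n 1 i = n - i - (if 2 * i \<le> n then 1 else 0) - pd"
    if "2 * p + 1 \<le> n"
  proof -
    have "?C \<subseteq> ?L" using that assms(1,2) unfolding C by auto
    then show "colour_deg (three_colouring n p) n 1 i = n - i - (if 2 * i \<le> n then 1 else 0) - pd"
      using deg(3) card_C card_lower_nbrs[OF assms(3)] by (simp add: card_Diff_subset)
    from \<open>?C \<subseteq> ?L\<close> have "?U - ?C = ?U" by auto
    then show "colour_deg (three_colouring n p) n 0 i = i - (if n < 2 * i then 1 else 0)"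
      using deg(2) card_upper_nbrs[OF assms(3)] by simp
  qed
qed

lemma irregular_three_colouringI:
  fixes n p :: nat and q :: "nat \<Rightarrow> nat"
  defines "D \<equiv> class_deg (three_colouring n p) q n"
  assumes path: "\<And>i j. i \<in> {1..n} \<Longrightarrow> j \<in> {1..n} \<Longrightarrow> i < j \<Longrightarrow> path_edge p i j \<Longrightarrow> D 2 i \<noteq> D 2 j"
    and upper: "\<And>i j. i \<in> {1..n} \<Longrightarrow> j \<in> {1..n} \<Longrightarrow> i < j \<Longrightarrow> \<not> path_edge p i j \<Longrightarrow>
      n < i + j \<Longrightarrow> D 0 i \<noteq> D 0 j"
    and lower: "\<And>i j. i \<in> {1..n} \<Longrightarrow> j \<in> {1..n} \<Longrightarrow> i < j \<Longrightarrow> \<not> path_edge p i j \<Longrightarrow>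
      \<not> n < i + j \<Longrightarrow> D 1 i \<noteq> D 1 j"
  shows "irregular_colouring (three_colouring n p) q n"
proof -
  have "D (three_colouring n p i j) i \<noteq> D (three_colouring n p i j) j"
    if "i \<in> {1..n}" "j \<in> {1..n}" "i < j" for i j
    using path[OF that] upper[OF that] lower[OF that] by (simp add: three_colouring_def)
  then show ?thesis
    unfolding irregular_colouring_def D_def[symmetric] by (metis linorder_neq_iff three_colouring_sym)
qed

lemma three_colouring_even:
  fixes d :: nat
  assumes n: "n = 2 * m" and m: "2 \<le> m"
  defines "q \<equiv> \<lambda>k. if k = 1 then d else 0"
  defines "D \<equiv> class_deg (three_colouring n (m + 1)) q n"
  shows "irregular_colouring (three_colouring n (m + 1)) q n" and "2 \<le> D 1 1"
proof -
  have p: "2 \<le> m + 1" "m + 1 + 1 \<le> n" "n < 2 * (m + 1) - 1" using n m by auto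
  note deg = colour_deg_three_colouring[OF p(1,2)]
  have D2: "D 2 x = (if x = m + 1 then 2 else if x = m \<or> x = m + 2 then 1 else 0)"
    if "x \<in> {1..n}" for x
    using deg(1)[OF that] by (simp add: D_def q_def class_deg_def)
  have D0: "(x < m \<and> D 0 x = x) \<or> (x = m \<and> D 0 x + 1 = m) \<or> (x = m + 1 \<and> D 0 x + 2 = m)
      \<or> (x = m + 2 \<and> D 0 x = m) \<or> (m + 3 \<le> x \<and> D 0 x + 1 = x)" if "x \<in> {1..n}" for x
  proof -
    have "x < m \<or> x = m \<or> x = m + 1 \<or> x = m + 2 \<or> m + 3 \<le> x" using that by auto
    then show ?thesis
      using deg(2)[OF that p(3)] that n m by (elim disjE) (simp_all add: D_def q_def class_deg_def)
  qed
  have D1: "(x = 1 \<and> D 1 x + 2 = n + d) \<or> (2 \<le> x \<and> x \<le> m \<and> D 1 x + x + 1 = n)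
      \<or> (m + 1 \<le> x \<and> D 1 x + x = n)" if "x \<in> {1..n}" for x
  proof -
    have "x = 1 \<or> (2 \<le> x \<and> x \<le> m) \<or> m + 1 \<le> x" using that by auto
    then show ?thesis
      using deg(3)[OF that p(3)] that n m by (elim disjE) (simp_all add: D_def q_def class_deg_def)
  qed
  show "2 \<le> D 1 1" using D1[of 1] n m by auto
  show "irregular_colouring (three_colouring n (m + 1)) q n"
    unfolding q_def
  proof (rule irregular_three_colouringI, fold q_def D_def)
    fix i j assume ij: "i \<in> {1..n}" "j \<in> {1..n}" "i < j"
    show "path_edge (m + 1) i j \<Longrightarrow> D 2 i \<noteq> D 2 j"
      using D2 ij m by (auto simp: path_edge_iff)
    show "n < i + j \<Longrightarrow> D 0 i \<noteq> D 0 j"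
      using D0[OF ij(1)] D0[OF ij(2)] ij(3) n m by (elim disjE conjE; linarith)
    show "\<not> n < i + j \<Longrightarrow> D 1 i \<noteq> D 1 j"
      using D1[OF ij(1)] D1[OF ij(2)] ij(3) n m by (elim disjE conjE; linarith)
  qed
qed

lemma three_colouring_odd:
  fixes d :: nat
  assumes n: "n = 2 * m + 1" and m: "2 \<le> m"
  defines "q \<equiv> \<lambda>k. if k = 1 then d else 0"
  defines "D \<equiv> class_deg (three_colouring n m) q n"
  shows "irregular_colouring (three_colouring n m) q n" and "2 \<le> D 1 1"
proof -
  have p: "2 \<le> m" "m + 1 \<le> n" "2 * m + 1 \<le> n" using n m by auto
  note deg = colour_deg_three_colouring[OF p(1,2)]
  have D2: "D 2 x = (if x = m then 2 else if x + 1 = m \<or> x = m + 1 then 1 else 0)"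
    if "x \<in> {1..n}" for x
    using deg(1)[OF that] m by (auto simp: D_def q_def class_deg_def)
  have D0: "(x \<le> m \<and> D 0 x = x) \<or> (m + 1 \<le> x \<and> D 0 x + 1 = x)" if "x \<in> {1..n}" for x
  proof -
    have "x \<le> m \<or> m + 1 \<le> x" using that by auto
    then show ?thesis
      using deg(4)[OF that p(3)] that n m by (elim disjE) (simp_all add: D_def q_def class_deg_def)
  qed
  have D1: "(2 \<le> x \<and> x + 2 \<le> m \<and> D 1 x + x = 2 * m) \<or> (x = 1 \<and> 3 \<le> m \<and> D 1 x + 1 = 2 * m + d)
      \<or> (2 \<le> x \<and> x + 1 = m \<and> D 1 x = m) \<or> (x = 1 \<and> m = 2 \<and> D 1 x = 2 + d)
      \<or> (x = m \<and> D 1 x + 2 = m) \<or> (x = m + 1 \<and> D 1 x + 1 = m) \<or> (m + 2 \<le> x \<and> D 1 x + x = 2 * m + 1)"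
    if "x \<in> {1..n}" for x
  proof -
    have "x + 2 \<le> m \<or> x + 1 = m \<or> x = m \<or> x = m + 1 \<or> m + 2 \<le> x" using that by auto
    then show ?thesis
      using deg(5)[OF that p(3)] that n m by (elim disjE) (simp_all add: D_def q_def class_deg_def)
  qed
  show "2 \<le> D 1 1" using D1[of 1] n m by auto
  show "irregular_colouring (three_colouring n m) q n"
    unfolding q_def
  proof (rule irregular_three_colouringI, fold q_def D_def)
    fix i j assume ij: "i \<in> {1..n}" "j \<in> {1..n}" "i < j"
    show "path_edge m i j \<Longrightarrow> D 2 i \<noteq> D 2 j"
      using D2 ij m by (auto simp: path_edge_iff)
    show "n < i + j \<Longrightarrow> D 0 i \<noteq> D 0 j"
      using D0[OF ij(1)] D0[OF ij(2)] ij(3) n m by (elim disjE conjE; linarith)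
    show "\<not> n < i + j \<Longrightarrow> D 1 i \<noteq> D 1 j"
      using D1[OF ij(1)] D1[OF ij(2)] ij(3) n m by (elim disjE conjE; linarith)
  qed
qed

lemma three_colouring_irregular:
  fixes d :: nat
  assumes "4 \<le> n"
  defines "q \<equiv> \<lambda>k. if k = 1 then d else 0"
  obtains p where "irregular_colouring (three_colouring n p) q n"
    and "2 \<le> class_deg (three_colouring n p) q n 1 1"
proof (cases "even n")
  case True
  then obtain m where "n = 2 * m" by (rule evenE)
  then show ?thesis using that three_colouring_even[of n m d] assms by (simp add: q_def)
next
  case False
  then obtain m where "n = 2 * m + 1" by (rule oddE)
  then show ?thesis using that three_colouring_odd[of n m d] assms by (simp add: q_def)
qed

section \<open>Cliques with pendant edges\<close>

definition clique_pendant_edges :: "(nat \<Rightarrow> 'a) \<Rightarrow> nat \<Rightarrow> 'a set \<Rightarrow> 'a set set" where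
  "clique_pendant_edges v n P =
     {{v i, v j} | i j. i \<in> {1..n} \<and> j \<in> {1..n} \<and> i \<noteq> j} \<union> (\<lambda>y. {v 1, y}) ` P"

locale clique_with_pendants =
  fixes v :: "nat \<Rightarrow> 'a" and n :: nat and P :: "'a set"
  assumes inj_v: "inj_on v {1..n}" and pendants_disjoint: "P \<inter> v ` {1..n} = {}"
    and finite_pendants: "finite P" and n_pos: "1 \<le> n"
begin

abbreviation edges :: "'a set set" where
  "edges \<equiv> clique_pendant_edges v n P"

lemma v_eq_iff: "i \<in> {1..n} \<Longrightarrow> j \<in> {1..n} \<Longrightarrow> v i = v j \<longleftrightarrow> i = j"
  using inj_v by (auto dest: inj_onD)

lemma pendant_not_v: "y \<in> P \<Longrightarrow> i \<in> {1..n} \<Longrightarrow> y \<noteq> v i"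
  using pendants_disjoint by auto

lemma clique_edgeI: "a \<in> {1..n} \<Longrightarrow> b \<in> {1..n} \<Longrightarrow> a \<noteq> b \<Longrightarrow> {v a, v b} \<in> edges"
  unfolding clique_pendant_edges_def by blast

lemma pendant_edgeI: "y \<in> P \<Longrightarrow> {v 1, y} \<in> edges"
  unfolding clique_pendant_edges_def by blast

lemma edge_cases:
  assumes "e \<in> edges"
  obtains (clique) a b where "a \<in> {1..n}" "b \<in> {1..n}" "a \<noteq> b" "e = {v a, v b}"
    | (pendant) y where "y \<in> P" "e = {v 1, y}"
  using assms unfolding clique_pendant_edges_def by blast

lemma incident_clique_vertex:
  assumes i: "i \<in> {1..n}" and col: "\<And>j. j \<in> {1..n} \<Longrightarrow> c {v i, v j} = col i j"
  shows "{e \<in> {e \<in> edges. c e = k}. v i \<in> e} =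
    (\<lambda>j. {v i, v j}) ` {j \<in> {1..n}. j \<noteq> i \<and> col i j = k} \<union>
    (\<lambda>y. {v 1, y}) ` {y \<in> P. i = 1 \<and> c {v 1, y} = k}"
    (is "_ = (\<lambda>j. {v i, v j}) ` ?J \<union> (\<lambda>y. {v 1, y}) ` ?Q")
proof (intro equalityI subsetI)
  have n1: "1 \<in> {1..n}" using n_pos by simp
  fix e assume "e \<in> {e \<in> {e \<in> edges. c e = k}. v i \<in> e}"
  then have e: "e \<in> edges" "c e = k" "v i \<in> e" by simp_all
  from e(1) show "e \<in> (\<lambda>j. {v i, v j}) ` ?J \<union> (\<lambda>y. {v 1, y}) ` ?Q"
  proof (cases rule: edge_cases)
    case (clique a b)
    then have "i = a \<or> i = b" using e(3) i v_eq_iff by auto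
    then obtain j where "j \<in> {1..n}" "j \<noteq> i" "e = {v i, v j}"
      using clique by (auto simp: insert_commute)
    moreover from this have "j \<in> ?J" using e(2) col by simp
    ultimately show ?thesis by blast
  next
    case (pendant y)
    then have "v i = v 1" using e(3) i pendant_not_v by auto
    then have "i = 1" using i n1 v_eq_iff by blast
    then have "y \<in> ?Q" using pendant e(2) by simp
    then show ?thesis using pendant by blast
  qed
next
  fix e assume "e \<in> (\<lambda>j. {v i, v j}) ` ?J \<union> (\<lambda>y. {v 1, y}) ` ?Q"
  then consider j where "j \<in> ?J" "e = {v i, v j}" | y where "y \<in> ?Q" "e = {v 1, y}" by blast
  then show "e \<in> {e \<in> {e \<in> edges. c e = k}. v i \<in> e}"
  proof cases
    case 1
    then show ?thesis using i col clique_edgeI[of i] by simp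
  next
    case 2
    then show ?thesis using pendant_edgeI by simp
  qed
qed

lemma edeg_clique_vertex:
  assumes i: "i \<in> {1..n}" and col: "\<And>j. j \<in> {1..n} \<Longrightarrow> c {v i, v j} = col i j"
  shows "edeg {e \<in> edges. c e = k} (v i) = class_deg col (\<lambda>k. card {y \<in> P. c {v 1, y} = k}) n k i"
proof -
  define J where "J = {j \<in> {1..n}. j \<noteq> i \<and> col i j = k}"
  define Q where "Q = {y \<in> P. i = 1 \<and> c {v 1, y} = k}"
  have inj_J: "inj_on (\<lambda>j. {v i, v j}) J"
    using i v_eq_iff by (intro inj_onI) (auto simp: J_def doubleton_eq_iff)
  have inj_Q: "inj_on (\<lambda>y. {v 1, y}) Q"
    using n_pos pendant_not_v by (intro inj_onI) (auto simp: Q_def doubleton_eq_iff)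
  have "{v i, v j} \<noteq> {v 1, y}" if "j \<in> J" "y \<in> Q" for j y
  proof
    assume "{v i, v j} = {v 1, y}"
    then have "y \<in> {v i, v j}" by auto
    then show False using that i pendant_not_v[of y] by (auto simp: J_def Q_def)
  qed
  then have disjoint: "(\<lambda>j. {v i, v j}) ` J \<inter> (\<lambda>y. {v 1, y}) ` Q = {}" by blast
  have incident: "{e \<in> {e \<in> edges. c e = k}. v i \<in> e} = (\<lambda>j. {v i, v j}) ` J \<union> (\<lambda>y. {v 1, y}) ` Q"
    unfolding J_def Q_def using i col by (rule incident_clique_vertex)
  have "finite J" "finite Q" using finite_pendants by (auto simp: J_def Q_def)
  then have "edeg {e \<in> edges. c e = k} (v i) = card J + card Q"
    unfolding edeg_def incident
    using card_Un_disjoint[OF finite_imageI finite_imageI disjoint] card_image[OF inj_J] card_image[OF inj_Q]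
    by linarith
  then show ?thesis
    by (cases "i = 1") (simp_all add: J_def Q_def class_deg_def colour_deg_def)
qed

lemma edeg_pendant:
  assumes y: "y \<in> P"
  shows "edeg {e \<in> edges. c e = k} y = (if c {v 1, y} = k then 1 else 0)"
proof -
  have incident: "{e \<in> edges. y \<in> e} = {{v 1, y}}"
  proof (intro equalityI subsetI)
    fix e assume "e \<in> {e \<in> edges. y \<in> e}"
    then have "e \<in> edges" "y \<in> e" by auto
    then show "e \<in> {{v 1, y}}"
    proof (cases rule: edge_cases)
      case (clique a b)
      then show ?thesis using \<open>y \<in> e\<close> y pendant_not_v by auto
    next
      case (pendant y')
      then show ?thesis using \<open>y \<in> e\<close> y n_pos pendant_not_v by auto
    qed
  qed (use pendant_edgeI y in auto)
  have "{e \<in> {e \<in> edges. c e = k}. y \<in> e} = {e \<in> {e \<in> edges. y \<in> e}. c e = k}" by blast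
  then show ?thesis unfolding edeg_def incident by (simp add: Collect_conv_if)
qed

lemma not_irr_decomp_2:
  assumes "card P < n div 2"
  shows "\<not> irr_decomp_k edges 2"
proof
  assume "irr_decomp_k edges 2"
  then obtain c :: "'a set \<Rightarrow> nat" where c: "\<forall>e\<in>edges. c e < 2" "\<forall>k<2. locally_irregular {e \<in> edges. c e = k}"
    unfolding irr_decomp_k_def by blast
  define col where "col i j = c {v i, v j}" for i j
  define q where "q = (\<lambda>k. card {y \<in> P. c {v 1, y} = k})"
  have sym: "col i j = col j i" for i j unfolding col_def by (simp only: insert_commute)
  have two: "\<forall>i\<in>{1..n}. \<forall>j\<in>{1..n}. i \<noteq> j \<longrightarrow> col i j < 2"
    using c(1) clique_edgeI by (simp add: col_def)
  have "P = {y \<in> P. c {v 1, y} = 0} \<union> {y \<in> P. c {v 1, y} = 1}"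
    using c(1) pendant_edgeI by (auto simp: less_2_cases_iff)
  then have "q 0 + q 1 = card P"
    using finite_pendants by (simp add: q_def card_Un_disjoint[symmetric] disjoint_iff)
  moreover have "irregular_colouring col q n"
    unfolding irregular_colouring_def
  proof (intro ballI impI)
    fix i j assume ij: "i \<in> {1..n}" "j \<in> {1..n}" "i \<noteq> j"
    have "{v i, v j} \<in> {e \<in> edges. c e = col i j}" using clique_edgeI[OF ij] by (simp add: col_def)
    moreover have "v i \<noteq> v j" using ij v_eq_iff by simp
    moreover have "col i j < 2" using two ij by blast
    ultimately have "edeg {e \<in> edges. c e = col i j} (v i) \<noteq> edeg {e \<in> edges. c e = col i j} (v j)"
      using c(2) unfolding locally_irregular_def by blast
    then show "class_deg col q n (col i j) i \<noteq> class_deg col q n (col i j) j"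
      using edeg_clique_vertex[of _ c col] ij by (simp add: col_def q_def)
  qed
  ultimately show False
    using no_irregular_2_colouring[OF sym two, of q] assms by simp
qed

lemma lift_index_colouring:
  assumes sym: "\<And>i j. col i j = col j i"
  obtains c where "\<And>i j. i \<in> {1..n} \<Longrightarrow> j \<in> {1..n} \<Longrightarrow> c {v i, v j} = col i j"
    and "\<And>y. y \<in> P \<Longrightarrow> c {v 1, y} = b"
proof
  define idx where "idx = inv_into {1..n} v"
  define c where "c e = (if e \<subseteq> v ` {1..n} then col (Min (idx ` e)) (Max (idx ` e)) else b)" for e
  show "c {v i, v j} = col i j" if "i \<in> {1..n}" "j \<in> {1..n}" for i j
  proof -
    have "idx ` {v i, v j} = {i, j}" using that inj_v by (simp add: idx_def)
    then have "c {v i, v j} = col (min i j) (max i j)"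
      using that by (simp add: c_def)
    then show ?thesis using sym[of i j] by (cases "i \<le> j") (simp_all add: max_def min_def)
  qed
  show "c {v 1, y} = b" if "y \<in> P" for y
    using that pendants_disjoint by (auto simp: c_def)
qed

lemma locally_irregular_classI:
  fixes b :: nat
  defines "q \<equiv> \<lambda>k. if k = b then card P else 0"
  assumes c_clique: "\<And>i j. i \<in> {1..n} \<Longrightarrow> j \<in> {1..n} \<Longrightarrow> c {v i, v j} = col i j"
    and c_pendant: "\<And>y. y \<in> P \<Longrightarrow> c {v 1, y} = b"
    and irr: "irregular_colouring col q n" and hub: "2 \<le> class_deg col q n b 1"
  shows "locally_irregular {e \<in> edges. c e = k}"
  unfolding locally_irregular_def
proof (intro allI impI)
  have "{y \<in> P. c {v 1, y} = k} = (if k = b then P else {})" for k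
    using c_pendant by auto
  then have q_eq: "q = (\<lambda>k. card {y \<in> P. c {v 1, y} = k})"
    by (simp add: q_def fun_eq_iff)
  have deg: "edeg {e \<in> edges. c e = k} (v i) = class_deg col q n k i" if "i \<in> {1..n}" for i k
    using edeg_clique_vertex[OF that, of c col] c_clique that q_eq by simp
  fix u w assume uw: "{u, w} \<in> {e \<in> edges. c e = k}" "u \<noteq> w"
  from uw(1) have "{u, w} \<in> edges" by simp
  then show "edeg {e \<in> edges. c e = k} u \<noteq> edeg {e \<in> edges. c e = k} w"
  proof (cases rule: edge_cases)
    case (clique i j)
    then have k: "k = col i j" using uw(1) c_clique by auto
    have "class_deg col q n k i \<noteq> class_deg col q n k j"
      using irr clique(1-3) unfolding irregular_colouring_def k by blast
    then have "edeg {e \<in> edges. c e = k} (v i) \<noteq> edeg {e \<in> edges. c e = k} (v j)"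
      using deg clique(1,2) by simp
    then show ?thesis using clique(4) by (auto simp: doubleton_eq_iff)
  next
    case (pendant y)
    then have "k = b" using uw(1) c_pendant by auto
    then have "edeg {e \<in> edges. c e = k} y = 1" "2 \<le> edeg {e \<in> edges. c e = k} (v 1)"
      using edeg_pendant[OF pendant(1), of c k] c_pendant[OF pendant(1)] hub deg[of 1 k] n_pos by auto
    then show ?thesis using pendant(2) by (auto simp: doubleton_eq_iff)
  qed
qed

lemma irr_decomp_3:
  assumes "4 \<le> n"
  shows "irr_decomp_k edges 3"
proof -
  obtain p where irr: "irregular_colouring (three_colouring n p) (\<lambda>k. if k = 1 then card P else 0) n"
    and hub: "2 \<le> class_deg (three_colouring n p) (\<lambda>k. if k = 1 then card P else 0) n 1 1"
    by (rule three_colouring_irregular[OF assms])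
  obtain c where c_clique: "\<And>i j. i \<in> {1..n} \<Longrightarrow> j \<in> {1..n} \<Longrightarrow> c {v i, v j} = three_colouring n p i j"
    and c_pendant: "\<And>y. y \<in> P \<Longrightarrow> c {v 1, y} = 1"
    using lift_index_colouring[where col = "three_colouring n p" and b = 1, OF three_colouring_sym]
    by blast
  have "c e < 3" if "e \<in> edges" for e
    using that
  proof (cases rule: edge_cases)
    case (clique i j)
    then show ?thesis using c_clique[of i j] by (simp add: three_colouring_def)
  next
    case (pendant y)
    then show ?thesis using c_pendant[OF pendant(1)] by simp
  qed
  moreover have "locally_irregular {e \<in> edges. c e = k}" for k
    using locally_irregular_classI[OF c_clique c_pendant irr hub] .
  ultimately show ?thesis unfolding irr_decomp_k_def by blast
qed

end

lemma split_graph_edges_eq: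
  assumes G: "simple_graph V E" and X: "X = v ` {1..n}" and v_inj: "inj_on v {1..n}"
    and Y: "Y = V - X"
    and clique: "\<forall>x\<in>X. \<forall>x'\<in>X. x \<noteq> x' \<longrightarrow> {x, x'} \<in> E"
    and stable: "\<forall>y\<in>Y. \<forall>y'\<in>Y. {y, y'} \<notin> E"
    and no_pendants: "\<forall>i\<in>{2..n}. \<forall>y\<in>Y. {v i, y} \<notin> E"
  shows "E = clique_pendant_edges v n {y \<in> Y. {v 1, y} \<in> E}"
    (is "E = ?K")
proof (intro equalityI subsetI)
  have mixed: "{x, y} \<in> ?K" if xy: "{x, y} \<in> E" "x \<in> X" "y \<in> Y" for x y
  proof -
    obtain i where i: "i \<in> {1..n}" "x = v i" using xy(2) X by blast
    then have "i = 1" using no_pendants xy(1,3) by force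
    then show ?thesis using xy i unfolding clique_pendant_edges_def by blast
  qed
  fix e assume "e \<in> E"
  then obtain x y where e: "e = {x, y}" "x \<noteq> y" "x \<in> V" "y \<in> V"
    using G unfolding simple_graph_def by blast
  consider "x \<in> X" "y \<in> X" | "x \<in> X" "y \<in> Y" | "x \<in> Y" "y \<in> X" | "x \<in> Y" "y \<in> Y"
    using e(3,4) Y by blast
  then show "e \<in> ?K"
  proof cases
    case 1
    then obtain i j where "i \<in> {1..n}" "j \<in> {1..n}" "x = v i" "y = v j" using X by blast
    then show ?thesis using e(1,2) unfolding clique_pendant_edges_def by blast
  next
    case 2
    then show ?thesis using mixed \<open>e \<in> E\<close> e(1) by blast
  next
    case 3
    then show ?thesis using mixed[of y x] \<open>e \<in> E\<close> e(1) by (simp add: insert_commute)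
  next
    case 4
    then show ?thesis using stable \<open>e \<in> E\<close> e(1) by blast
  qed
next
  fix e assume "e \<in> ?K"
  then consider i j where "i \<in> {1..n}" "j \<in> {1..n}" "i \<noteq> j" "e = {v i, v j}"
    | y where "{v 1, y} \<in> E" "e = {v 1, y}"
    unfolding clique_pendant_edges_def by blast
  then show "e \<in> E"
  proof cases
    case 1
    then have "v i \<noteq> v j" using v_inj by (auto dest: inj_onD)
    then show ?thesis using 1 clique X by blast
  qed simp
qed

theorem lemma2p3:
  fixes V :: "'a set" and E :: "'a set set" and X Y :: "'a set"
    and v :: "nat \<Rightarrow> 'a" and n :: nat and d :: "nat \<Rightarrow> nat"
  assumes G: "simple_graph V E"
    and X_def: "X = v ` {1..n}" and v_inj: "inj_on v {1..n}"
    and XV: "X \<subseteq> V" and Y_def: "Y = V - X"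
    and clique: "\<forall>x\<in>X. \<forall>x'\<in>X. x \<noteq> x' \<longrightarrow> {x, x'} \<in> E"
    and maximal: "\<forall>y\<in>Y. \<exists>x\<in>X. {x, y} \<notin> E"
    and stable: "\<forall>y\<in>Y. \<forall>y'\<in>Y. {y, y'} \<notin> E"
    and d_def: "\<forall>i\<in>{1..n}. d i = card {y\<in>Y. {v i, y} \<in> E}"
    and d_mono: "\<forall>i\<in>{1..n}. \<forall>j\<in>{1..n}. i \<le> j \<longrightarrow> d j \<le> d i"
    and n4: "n \<ge> 4"
    and d1: "d 1 < n div 2"
    and d2: "d 2 = 0"
  shows "irr_decomposable E \<and> chi_irr E = 3"
proof -
  define P where "P = {y \<in> Y. {v 1, y} \<in> E}"
  have fin_Y: "finite Y" using G Y_def by (simp add: simple_graph_def)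
  have "\<forall>i\<in>{2..n}. \<forall>y\<in>Y. {v i, y} \<notin> E"
  proof (intro ballI)
    fix i y assume i: "i \<in> {2..n}" and y: "y \<in> Y"
    have "d i = 0" using d_mono d2 i n4 by force
    then have "{y \<in> Y. {v i, y} \<in> E} = {}" using d_def i fin_Y by auto
    then show "{v i, y} \<notin> E" using y by blast
  qed
  then have E_eq: "E = clique_pendant_edges v n P"
    unfolding P_def using split_graph_edges_eq[OF G X_def v_inj Y_def clique stable] by blast
  interpret clique_with_pendants v n P
    using v_inj n4 fin_Y by unfold_locales (auto simp: P_def Y_def X_def)
  have "card P = d 1" using d_def n4 by (simp add: P_def)
  then have "irr_decomp_k E 3" "\<not> irr_decomp_k E 2"
    using irr_decomp_3 not_irr_decomp_2 n4 d1 unfolding E_eq by simp_all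
  then show ?thesis
    using chi_irr_eqI[of E 2] by (auto simp: irr_decomposable_def numeral_eq_Suc)
qed

end
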